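(* Let $\Omega\subset\mathbb{R}^2$ be a compact set that can be covered by at most $|\Omega|+\epsilon_1$ squares $Q_1(m)$, $m\in\mathbb{Z}^2$, for some $\epsilon_1\ge0$. Let $\Lambda_\Omega=\{\lambda_j\}_{j=1}^r$ be a finite sequence of independent and identically distributed random variables uniformly distributed in $\Omega$, let $N_0=\sup_{m\in\mathbb{Z}^2}\#(\Lambda_\Omega\cap Q_1(m))$, and let $a>|\Omega|^{-1}$. Then $$\mathbb{P}(N_0>ar)\le(|\Omega|+\epsilon_1)\exp\Big(-r\big(a\ln(a|\Omega|)-(a-|\Omega|^{-1})\big)\Big).$$
   Context: $Q_1(m)=[m_1-\tfrac12,m_1+\tfrac12]\times[m_2-\tfrac12,m_2+\tfrac12]$ for $m=(m_1,m_2)\in\mathbb{Z}^2$; $|\Omega|$ is the Lebesgue measure of $\Omega$. *)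

theory Defs
  imports "HOL-Probability.Probability"
begin

definition Q1 :: "int \<times> int \<Rightarrow> (real \<times> real) set" where
  "Q1 m = {real_of_int (fst m) - 1/2 .. real_of_int (fst m) + 1/2} \<times>
          {real_of_int (snd m) - 1/2 .. real_of_int (snd m) + 1/2}"

text \<open>N_0 = sup over m of the number of indices j < r with lambda_j in Q1 m
  (points counted with multiplicity as a sequence).\<close>
definition N0 :: "nat \<Rightarrow> (nat \<Rightarrow> real \<times> real) \<Rightarrow> nat" where
  "N0 r lam = Sup (range (\<lambda>m. card {j \<in> {..<r}. lam j \<in> Q1 m}))"

end

theory Submission
  imports Defs
begin

text \<open>
  Off the null set formed by the lines \<open>x = k + 1/2\<close> and \<open>y = k + 1/2\<close>, every point of
  \<open>\<Omega>\<close> lies in exactly one square of the cover, so \<open>N\<^sub>0 > a r\<close> forces one of the at most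
  \<open>|\<Omega>| + \<epsilon>\<^sub>1\<close> covering squares to contain at least \<open>a r\<close> of the points. The number of
  points in a fixed square is a sum of \<open>r\<close> independent indicators with success probability
  at most \<open>|\<Omega>|\<^sup>-\<^sup>1\<close>, and the multiplicative Chernoff bound with \<open>e\<^sup>t = a |\<Omega>|\<close> gives the
  exponential factor; a union bound over the squares finishes the proof.
\<close>

lemma sum_indicator_eq_card_lessThan:
  fixes r :: nat
  shows "(\<Sum>j<r. indicator Q (f j) :: real) = real (card {j\<in>{..<r}. f j \<in> Q})"
  by (simp add: indicator_def Int_def)

lemma (in prob_space) nn_integral_exp_indicator_le:
  assumes Y: "Y \<in> measurable M N" and Q: "Q \<in> sets N" and t: "t \<ge> 0"
    and q: "prob (Y -` Q \<inter> space M) \<le> q"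
  shows "(\<integral>\<^sup>+\<omega>. ennreal (exp (t * indicator Q (Y \<omega>))) \<partial>M) \<le> ennreal (1 + (exp t - 1) * q)"
proof -
  define A where "A = Y -` Q \<inter> space M"
  have A: "A \<in> events" unfolding A_def using Y Q by (auto intro: measurable_sets)
  have et: "exp t - 1 \<ge> 0" using t by simp
  have "(\<integral>\<^sup>+\<omega>. ennreal (exp (t * indicator Q (Y \<omega>))) \<partial>M)
      = (\<integral>\<^sup>+\<omega>. 1 + ennreal (exp t - 1) * indicator A \<omega> \<partial>M)"
  proof (intro nn_integral_cong)
    fix \<omega> assume "\<omega> \<in> space M"
    moreover have "ennreal (exp t) = 1 + ennreal (exp t - 1)"
      using et ennreal_plus[of 1 "exp t - 1"] by simp
    ultimately show "ennreal (exp (t * indicator Q (Y \<omega>))) = 1 + ennreal (exp t - 1) * indicator A \<omega>"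
      by (auto simp: A_def indicator_def)
  qed
  also have "\<dots> = 1 + ennreal (exp t - 1) * emeasure M A"
    using A by (subst nn_integral_add) (auto simp: nn_integral_cmult_indicator emeasure_space_1)
  also have "\<dots> = ennreal (1 + (exp t - 1) * prob A)"
    using et by (simp add: emeasure_eq_measure ennreal_mult flip: ennreal_1)
  also have "\<dots> \<le> ennreal (1 + (exp t - 1) * q)"
    using q et by (intro ennreal_leI add_left_mono mult_left_mono) (auto simp: A_def)
  finally show ?thesis .
qed

lemma (in prob_space) Chernoff_ineq_card_ge:
  assumes indep: "indep_vars (\<lambda>_. N) X {..<r}"
    and Q: "Q \<in> sets N" and t: "t > 0" and q: "q \<ge> 0"
    and p: "\<And>j. j < r \<Longrightarrow> prob (X j -` Q \<inter> space M) \<le> q"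
  shows "prob {\<omega>\<in>space M. c \<le> real (card {j\<in>{..<r}. X j \<omega> \<in> Q})}
           \<le> exp (- t * c) * exp (real r * q * (exp t - 1))"
proof -
  have rv: "X j \<in> measurable M N" if "j < r" for j
    using indep that unfolding indep_vars_def by auto
  define S where "S \<omega> = (\<Sum>j<r. indicator Q (X j \<omega>) :: real)" for \<omega>
  have "S \<in> borel_measurable M"
    unfolding S_def using rv Q by measurable
  then have "ennreal (prob {\<omega>\<in>space M. c \<le> S \<omega>})
      \<le> ennreal (exp (- t * c)) * (\<integral>\<^sup>+\<omega>. ennreal (exp (t * S \<omega>)) * indicator (space M) \<omega> \<partial>M)"
    unfolding emeasure_eq_measure[symmetric] by (intro Chernoff_ineq_nn_integral_ge t) auto
  also have "(\<integral>\<^sup>+\<omega>. ennreal (exp (t * S \<omega>)) * indicator (space M) \<omega> \<partial>M)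
      \<le> ennreal (exp (real r * q * (exp t - 1)))"
  proof -
    have "(\<integral>\<^sup>+\<omega>. ennreal (exp (t * S \<omega>)) * indicator (space M) \<omega> \<partial>M)
        = (\<integral>\<^sup>+\<omega>. (\<Prod>j<r. ennreal (exp (t * indicator Q (X j \<omega>)))) \<partial>M)"
    proof (intro nn_integral_cong)
      fix \<omega>
      have "exp (t * S \<omega>) = (\<Prod>j<r. exp (t * indicator Q (X j \<omega>)))"
        unfolding S_def sum_distrib_left by (rule exp_sum) simp
      then show "ennreal (exp (t * S \<omega>)) * indicator (space M) \<omega>
          = (\<Prod>j<r. ennreal (exp (t * indicator Q (X j \<omega>))))" if "\<omega> \<in> space M"
        using that by (simp add: prod_ennreal)
    qed
    also have "\<dots> = (\<Prod>j<r. \<integral>\<^sup>+\<omega>. ennreal (exp (t * indicator Q (X j \<omega>))) \<partial>M)"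
      using Q by (intro indep_vars_nn_integral indep_vars_compose2[OF indep]) auto
    also have "\<dots> \<le> (\<Prod>j<r. ennreal (1 + (exp t - 1) * q))"
      using rv Q t p by (intro prod_mono_ennreal nn_integral_exp_indicator_le) auto
    also have "\<dots> = ennreal ((1 + (exp t - 1) * q) ^ r)"
      unfolding prod_constant card_lessThan using t q by (intro ennreal_power) simp
    also have "\<dots> \<le> ennreal (exp ((exp t - 1) * q) ^ r)"
      using t q exp_ge_add_one_self[of "(exp t - 1) * q"]
      by (intro ennreal_leI power_mono) (auto simp: add.commute)
    also have "\<dots> = ennreal (exp (real r * q * (exp t - 1)))"
      by (simp add: exp_of_nat_mult[symmetric] mult_ac)
    finally show ?thesis .
  qed
  finally have "ennreal (prob {\<omega>\<in>space M. c \<le> S \<omega>})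
      \<le> ennreal (exp (- t * c) * exp (real r * q * (exp t - 1)))"
    by (simp add: ennreal_mult mult_left_mono)
  then show ?thesis
    by (simp add: S_def sum_indicator_eq_card_lessThan del: mult_minus_left)
qed

lemma (in prob_space) Chernoff_ineq_card_ge_entropy:
  assumes indep: "indep_vars (\<lambda>_. N) X {..<r}"
    and Q: "Q \<in> sets N" and q: "q > 0" and a: "a > q"
    and p: "\<And>j. j < r \<Longrightarrow> prob (X j -` Q \<inter> space M) \<le> q"
  shows "prob {\<omega>\<in>space M. a * real r \<le> real (card {j\<in>{..<r}. X j \<omega> \<in> Q})}
           \<le> exp (- real r * (a * ln (a / q) - (a - q)))"
proof -
  define t where "t = ln (a / q)" \<comment> \<open>minimises \<open>q (e\<^sup>t - 1) - a t\<close>\<close>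
  have "a / q > 1" using q a by simp
  then have t: "t > 0" and exp_t: "exp t = a / q"
    using q a by (auto simp: t_def)
  have "prob {\<omega>\<in>space M. a * real r \<le> real (card {j\<in>{..<r}. X j \<omega> \<in> Q})}
      \<le> exp (- t * (a * real r)) * exp (real r * q * (exp t - 1))"
    using q by (intro Chernoff_ineq_card_ge[OF indep Q t _ p]) auto
  also have "\<dots> = exp (- real r * (a * t - (a - q)))"
    unfolding exp_t using q by (simp add: field_simps flip: exp_add)
  finally show ?thesis by (simp add: t_def)
qed

definition half_integer_grid :: "(real \<times> real) set" where
  "half_integer_grid =
     (\<Union>k::int. ({real_of_int k + 1/2} \<times> UNIV) \<union> (UNIV \<times> {real_of_int k + 1/2}))"

lemma half_integer_grid_null: "half_integer_grid \<in> null_sets lborel"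
proof -
  have "half_integer_grid \<in> null_sets (lborel \<Otimes>\<^sub>M lborel)"
    unfolding half_integer_grid_def
    by (intro null_sets_UN' null_sets.Un lborel.times_in_null_sets1 lborel.times_in_null_sets2)
       (auto simp: null_sets_def)
  then show ?thesis by (simp add: lborel_prod)
qed

lemma Q1_eq_cbox:
  "Q1 m = cbox (real_of_int (fst m) - 1/2, real_of_int (snd m) - 1/2)
               (real_of_int (fst m) + 1/2, real_of_int (snd m) + 1/2)"
  unfolding cbox_Pair_eq Q1_def by (simp only: cbox_interval)

lemma measure_Q1: "measure lborel (Q1 m) = 1"
  unfolding Q1_eq_cbox by (simp only: content_Pair) simp

lemma fmeasurable_Q1: "Q1 m \<in> fmeasurable lborel"
  unfolding Q1_eq_cbox by simp

lemma Q1_unique: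
  assumes "x \<in> Q1 m" "x \<in> Q1 m'" "x \<notin> half_integer_grid"
  shows "m = m'"
proof -
  have coord_eq: "i = j"
    if "real_of_int i - 1/2 \<le> y" "y \<le> real_of_int i + 1/2"
       "real_of_int j - 1/2 \<le> y" "y \<le> real_of_int j + 1/2"
       "\<And>k::int. y \<noteq> real_of_int k + 1/2" for i j :: int and y :: real
  proof -
    have "y \<noteq> real_of_int (i - 1) + 1/2" "y \<noteq> real_of_int i + 1/2"
         "y \<noteq> real_of_int (j - 1) + 1/2" "y \<noteq> real_of_int j + 1/2"
      using that(5) by blast+
    then have "real_of_int i < real_of_int j + 1" "real_of_int j < real_of_int i + 1"
      using that(1-4) by auto
    then show ?thesis by linarith
  qed
  have off: "fst x \<noteq> real_of_int k + 1/2" "snd x \<noteq> real_of_int k + 1/2" for k :: int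
    using assms(3) unfolding half_integer_grid_def by (cases x; auto)+
  have "fst m = fst m'"
    using assms(1,2) off by (intro coord_eq[of _ "fst x"]) (auto simp: Q1_def mem_Times_iff)
  moreover have "snd m = snd m'"
    using assms(1,2) off by (intro coord_eq[of _ "snd x"]) (auto simp: Q1_def mem_Times_iff)
  ultimately show ?thesis by (simp add: prod_eq_iff)
qed

lemma (in prob_space) AE_uniform_off_half_integer_grid:
  assumes "X \<in> borel_measurable M" "distr M lborel X = uniform_measure lborel \<Omega>"
    and "\<Omega> \<in> sets borel"
  shows "AE \<omega> in M. X \<omega> \<in> \<Omega> \<and> X \<omega> \<notin> half_integer_grid"
proof -
  have "AE x in distr M lborel X. x \<in> \<Omega> \<and> x \<notin> half_integer_grid"
    unfolding assms(2) using assms(3) AE_not_in[OF half_integer_grid_null]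
    by (intro AE_uniform_measureI) auto
  then show ?thesis
    using assms(1,3) half_integer_grid_null by (subst (asm) AE_distr_iff) auto
qed

lemma (in prob_space) prob_uniform_in_Q1_le:
  assumes "X \<in> borel_measurable M" "distr M lborel X = uniform_measure lborel \<Omega>"
    and "emeasure lborel \<Omega> \<noteq> 0" "emeasure lborel \<Omega> \<noteq> \<infinity>"
  shows "prob (X -` Q1 m \<inter> space M) \<le> 1 / measure lborel \<Omega>"
proof -
  have "measure lborel (\<Omega> \<inter> Q1 m) \<le> measure lborel (Q1 m)"
    using emeasure_neq_0_sets[OF assms(3)] fmeasurable_Q1 by (intro measure_mono_fmeasurable) auto
  moreover have "prob (X -` Q1 m \<inter> space M) = measure (distr M lborel X) (Q1 m)"
    using assms(1) fmeasurableD[OF fmeasurable_Q1] by (subst measure_distr) auto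
  ultimately show ?thesis
    using assms(2-4) fmeasurableD[OF fmeasurable_Q1] by (simp add: measure_Q1 divide_right_mono)
qed

lemma N0_attained: "\<exists>m. N0 r lam = card {j\<in>{..<r}. lam j \<in> Q1 m}"
proof -
  have "finite (range (\<lambda>m. card {j\<in>{..<r}. lam j \<in> Q1 m}))"
    by (rule finite_subset[of _ "{..r}"]) (auto intro!: card_mono[of "{..<r}", simplified])
  then show ?thesis
    unfolding N0_def by (metis (no_types, lifting) Sup_nat_def Max_in imageE range_eqI empty_iff)
qed

lemma N0_gt_imp_card_gt:
  assumes off_grid: "\<And>j. j < r \<Longrightarrow> lam j \<in> \<Omega> \<and> lam j \<notin> half_integer_grid"
    and cover: "\<Omega> \<subseteq> (\<Union>m\<in>C. Q1 m)" and b: "b \<ge> 0" and N0: "real (N0 r lam) > b"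
  shows "\<exists>m\<in>C. b < real (card {j\<in>{..<r}. lam j \<in> Q1 m})"
proof -
  obtain m where m: "N0 r lam = card {j\<in>{..<r}. lam j \<in> Q1 m}"
    using N0_attained by blast
  with N0 b have "card {j\<in>{..<r}. lam j \<in> Q1 m} > 0" by simp
  then obtain j where j: "j < r" "lam j \<in> Q1 m" by (auto simp: card_gt_0_iff)
  with off_grid cover obtain m' where "m' \<in> C" "lam j \<in> Q1 m'" by blast
  moreover have "m = m'"
    using Q1_unique j off_grid \<open>lam j \<in> Q1 m'\<close> by blast
  ultimately show ?thesis using N0 m by auto
qed

lemma (in prob_space) prob_N0_gt_le_card_cover:
  fixes X :: "nat \<Rightarrow> 'a \<Rightarrow> real \<times> real"
  assumes rv: "\<And>j. j < r \<Longrightarrow> X j \<in> borel_measurable M"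
    and C: "finite C" "\<Omega> \<subseteq> (\<Union>m\<in>C. Q1 m)" and b: "b \<ge> 0"
    and off_grid: "AE \<omega> in M. \<forall>j<r. X j \<omega> \<in> \<Omega> \<and> X j \<omega> \<notin> half_integer_grid"
    and square: "\<And>m. prob {\<omega>\<in>space M. b \<le> real (card {j\<in>{..<r}. X j \<omega> \<in> Q1 m})} \<le> \<beta>"
  shows "prob {\<omega>\<in>space M. real (N0 r (\<lambda>j. X j \<omega>)) > b} \<le> real (card C) * \<beta>"
proof -
  define E where "E m = {\<omega>\<in>space M. b \<le> real (card {j\<in>{..<r}. X j \<omega> \<in> Q1 m})}" for m
  have E: "E m \<in> events" for m
  proof -
    have "(\<lambda>\<omega>. \<Sum>j<r. indicator (Q1 m) (X j \<omega>) :: real) \<in> borel_measurable M"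
      using rv fmeasurableD[OF fmeasurable_Q1] by measurable
    then show ?thesis
      unfolding E_def sum_indicator_eq_card_lessThan[symmetric] by measurable
  qed
  have "AE \<omega> in M. \<omega> \<in> {\<omega>\<in>space M. real (N0 r (\<lambda>j. X j \<omega>)) > b} \<longrightarrow> \<omega> \<in> (\<Union>m\<in>C. E m)"
    using off_grid
  proof eventually_elim
    case (elim \<omega>)
    then show ?case
      using N0_gt_imp_card_gt[of r "\<lambda>j. X j \<omega>" \<Omega> C b] C(2) b by (force simp: E_def)
  qed
  then have "prob {\<omega>\<in>space M. real (N0 r (\<lambda>j. X j \<omega>)) > b} \<le> prob (\<Union>m\<in>C. E m)"
    using C(1) E by (intro finite_measure_mono_AE) auto
  also have "\<dots> \<le> (\<Sum>m\<in>C. prob (E m))"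
    using C(1) E by (intro measure_UNION_le) auto
  also have "\<dots> \<le> real (card C) * \<beta>"
    using sum_mono[of C "\<lambda>m. prob (E m)" "\<lambda>_. \<beta>"] square by (simp add: E_def)
  finally show ?thesis .
qed

theorem lemma4p6:
  fixes \<Omega> :: "(real \<times> real) set"
    and M :: "'s measure"
    and X :: "nat \<Rightarrow> 's \<Rightarrow> real \<times> real"
    and r :: nat and a \<epsilon>1 :: real
  assumes "compact \<Omega>"
    and "measure lborel \<Omega> > 0"
    and "\<epsilon>1 \<ge> 0"
    and "\<exists>C. finite C \<and> \<Omega> \<subseteq> (\<Union>m\<in>C. Q1 m) \<and> real (card C) \<le> measure lborel \<Omega> + \<epsilon>1"
    and "prob_space M"
    and "prob_space.indep_vars M (\<lambda>_. lborel) X {..<r}"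
    and "\<And>j. j < r \<Longrightarrow> distr M lborel (X j) = uniform_measure lborel \<Omega>"
    and "a > 1 / measure lborel \<Omega>"
  shows "measure M {\<omega> \<in> space M. real (N0 r (\<lambda>j. X j \<omega>)) > a * real r}
         \<le> (measure lborel \<Omega> + \<epsilon>1) *
           exp (- real r * (a * ln (a * measure lborel \<Omega>) - (a - 1 / measure lborel \<Omega>)))"
proof -
  interpret prob_space M by fact
  define \<mu> where "\<mu> = measure lborel \<Omega>"
  define \<beta> where "\<beta> = exp (- real r * (a * ln (a * \<mu>) - (a - 1 / \<mu>)))"
  obtain C where C: "finite C" "\<Omega> \<subseteq> (\<Union>m\<in>C. Q1 m)" "real (card C) \<le> \<mu> + \<epsilon>1"
    using assms(4) unfolding \<mu>_def by blast
  have \<mu>: "\<mu> > 0" using assms(2) by (simp add: \<mu>_def)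
  have a: "a > 0" using assms(8) \<mu> less_trans[of 0 "1 / \<mu>" a] by (simp add: \<mu>_def)
  have \<Omega>: "\<Omega> \<in> sets borel" "emeasure lborel \<Omega> \<noteq> 0" "emeasure lborel \<Omega> \<noteq> \<infinity>"
    using assms(1,2) emeasure_bounded_finite[OF compact_imp_bounded[OF assms(1)]]
    by (auto simp: borel_closed compact_imp_closed measure_def)
  have rv: "X j \<in> borel_measurable M" if "j < r" for j
    using assms(6) that unfolding indep_vars_def by auto
  have off_grid: "AE \<omega> in M. \<forall>j<r. X j \<omega> \<in> \<Omega> \<and> X j \<omega> \<notin> half_integer_grid"
    using AE_uniform_off_half_integer_grid[OF rv assms(7) \<Omega>(1)] by (simp add: AE_all_countable)
  have "prob (X j -` Q1 m \<inter> space M) \<le> 1 / \<mu>" if "j < r" for j m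
    using prob_uniform_in_Q1_le[OF rv assms(7) \<Omega>(2,3)] that by (simp add: \<mu>_def)
  then have "prob {\<omega>\<in>space M. a * real r \<le> real (card {j\<in>{..<r}. X j \<omega> \<in> Q1 m})} \<le> \<beta>" for m
    using Chernoff_ineq_card_ge_entropy[OF assms(6) fmeasurableD[OF fmeasurable_Q1], of "1 / \<mu>" a]
      assms(8) \<mu> by (simp add: \<beta>_def \<mu>_def)
  then have "prob {\<omega>\<in>space M. real (N0 r (\<lambda>j. X j \<omega>)) > a * real r} \<le> real (card C) * \<beta>"
    using a by (intro prob_N0_gt_le_card_cover[OF rv C(1,2) _ off_grid]) auto
  also have "\<dots> \<le> (\<mu> + \<epsilon>1) * \<beta>"
    using C(3) by (intro mult_right_mono) (auto simp: \<beta>_def)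
  finally show ?thesis by (simp add: \<beta>_def \<mu>_def)
qed

end
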